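(* Let $n\in\{0,1,2,\dots\}$, let $q\in C(0,1)$ be nonnegative with compact support in $(0,1)$, and let $\ell\ge2$ be an integer. Then for all $x_1,x_2\in[2^{-\ell},1-2^{-\ell}]$, $$\frac{u_{q,n}(x_1)}{u_{q,n}(x_2)}\le\exp\bigl[2^{\ell/2}\|q\|_{\ell+1}\bigr].$$
   Context: For $0<a<b<1$, $\mathring W_2^1(a,b)$ is the closure of $C_0^\infty(a,b)$ in $W_2^1$, extended by zero to $[0,1]$; for an integer $m\ge2$, $\|q\|_m=\sup\{\int_0^1 qy\,dx: y\in\mathring W_2^1(2^{-m},1-2^{-m}),\ \|y'\|_{L_2[0,1]}\le1\}$. For such $q$, $\lambda_0(q)<\lambda_1(q)<\dots$ are the eigenvalues of $-y''+qy=\lambda y$, $y(0)=y(1)=0$, $y_{q,n}$ is a real eigenfunction for $\lambda_n(q)$ normalized by $\|y_{q,n}\|_{L_2[0,1]}=1$, and $u_{q,n}=(y_{q,n}')^2+\lambda_n(q)y_{q,n}^2$. *)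

theory Defs
  imports "HOL-Analysis.Analysis"
begin

definition smooth_compact :: "real \<Rightarrow> real \<Rightarrow> (real \<Rightarrow> real) \<Rightarrow> bool" where
  "smooth_compact a b \<phi> \<longleftrightarrow>
     (\<forall>k::nat. \<forall>x. ((deriv ^^ k) \<phi>) differentiable (at x)) \<and>
     (\<exists>c d. a < c \<and> c \<le> d \<and> d < b \<and> (\<forall>x. x \<notin> {c..d} \<longrightarrow> \<phi> x = 0))"

definition L2_01 :: "(real \<Rightarrow> real) \<Rightarrow> bool" where
  "L2_01 f \<longleftrightarrow> f \<in> borel_measurable lborel \<and>
     integrable lborel (\<lambda>x. indicator {0..1} x * (f x)\<^sup>2)"

definition L2_sq :: "(real \<Rightarrow> real) \<Rightarrow> real" where
  "L2_sq f = (LINT x:{0..1}|lborel. (f x)\<^sup>2)"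

(* y belongs to the closure of C_0^infinity(a,b) in W_2^1 (extended by zero to [0,1]),
   and g is its (weak) derivative: there are test functions phi_k with
   phi_k \<rightarrow> y and phi_k' \<rightarrow> g in L_2[0,1]. *)
definition W0 :: "real \<Rightarrow> real \<Rightarrow> (real \<Rightarrow> real) \<Rightarrow> (real \<Rightarrow> real) \<Rightarrow> bool" where
  "W0 a b y g \<longleftrightarrow> L2_01 y \<and> L2_01 g \<and>
     (\<exists>\<phi>::nat \<Rightarrow> real \<Rightarrow> real. (\<forall>k. smooth_compact a b (\<phi> k)) \<and>
        (\<lambda>k. L2_sq (\<lambda>x. \<phi> k x - y x)) \<longlonglongrightarrow> 0 \<and>
        (\<lambda>k. L2_sq (\<lambda>x. deriv (\<phi> k) x - g x)) \<longlonglongrightarrow> 0)"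

definition qnorm :: "(real \<Rightarrow> real) \<Rightarrow> nat \<Rightarrow> real" where
  "qnorm q m = Sup {LINT x:{0..1}|lborel. q x * y x | y g.
      W0 (1 / 2 ^ m) (1 - 1 / 2 ^ m) y g \<and> L2_sq g \<le> 1}"

definition eigfun :: "(real \<Rightarrow> real) \<Rightarrow> real \<Rightarrow> (real \<Rightarrow> real) \<Rightarrow> bool" where
  "eigfun q lam y \<longleftrightarrow> continuous_on {0..1} y \<and> y 0 = 0 \<and> y 1 = 0 \<and>
     (\<exists>x\<in>{0..1}. y x \<noteq> 0) \<and>
     (\<forall>x\<in>{0<..<1}. y differentiable (at x) \<and>
        (deriv y has_real_derivative ((q x - lam) * y x)) (at x))"

definition eigval :: "(real \<Rightarrow> real) \<Rightarrow> real \<Rightarrow> bool" where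
  "eigval q lam \<longleftrightarrow> (\<exists>y. eigfun q lam y)"

definition eig :: "(real \<Rightarrow> real) \<Rightarrow> nat \<Rightarrow> real" where
  "eig q n = (THE lam. eigval q lam \<and> card {mu. eigval q mu \<and> mu < lam} = n)"

definition uqn :: "(real \<Rightarrow> real) \<Rightarrow> nat \<Rightarrow> (real \<Rightarrow> real) \<Rightarrow> real \<Rightarrow> real" where
  "uqn q n y x = (deriv y x)\<^sup>2 + eig q n * (y x)\<^sup>2"

end

theory Submission
  imports Defs "HOL-Computational_Algebra.Polynomial"
begin

text \<open>Write \<open>u = y'\<^sup>2 + \<lambda> y\<^sup>2\<close>. Along the equation \<open>y'' = (q - \<lambda>) y\<close> one has
  \<open>u' = 2 q y y'\<close>, and \<open>\<bar>2 y y'\<bar> \<le> u / \<surd>\<lambda>\<close>, so by Gronwall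
  \<open>u(x\<^sub>1) / u(x\<^sub>2) \<le> exp (\<integral> q / \<surd>\<lambda>)\<close>, the integral taken between \<open>x\<^sub>1\<close>
  and \<open>x\<^sub>2\<close>. This integral is bounded by testing \<open>q\<close> against a smooth plateau \<open>\<phi>\<close> that is
  1 on \<open>[2\<^sup>-\<^sup>l, 1 - 2\<^sup>-\<^sup>l]\<close> and supported in \<open>(2\<^sup>-\<^sup>l\<^sup>-\<^sup>1, 1 - 2\<^sup>-\<^sup>l\<^sup>-\<^sup>1)\<close>:
  after normalising \<open>\<phi>'\<close> in \<open>L\<^sub>2\<close>, \<open>\<integral> q \<le> \<integral> q \<phi> \<le> \<parallel>\<phi>'\<parallel> \<parallel>q\<parallel>\<^sub>l\<^sub>+\<^sub>1\<close>
  with \<open>\<parallel>\<phi>'\<parallel>\<^sup>2 \<le> 8 \<cdot> 2\<^sup>l \<le> \<lambda> 2\<^sup>l\<close>. The last inequality uses \<open>\<lambda> \<ge> 8\<close>, which follows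
  from a Picone-type identity since \<open>q \<ge> 0\<close>.\<close>

section \<open>Infinitely differentiable functions and smooth plateaus\<close>

definition infinitely_differentiable :: "(real \<Rightarrow> real) \<Rightarrow> bool" where
  "infinitely_differentiable f \<longleftrightarrow>
     (\<exists>D. D 0 = f \<and> (\<forall>k x. (D k has_real_derivative D (Suc k) x) (at x)))"

lemma iterated_deriv_eq:
  assumes "D 0 = f" "\<And>k x. (D k has_real_derivative D (Suc k) x) (at x)"
  shows "(deriv ^^ k) f = D k"
proof (induction k)
  case 0 then show ?case using assms(1) by simp
next
  case (Suc k) then show ?case by (auto intro!: ext DERIV_imp_deriv assms(2))
qed

lemma infinitely_differentiable_iterated_deriv:
  assumes "infinitely_differentiable f"
  shows "(deriv ^^ k) f differentiable (at x)"
proof -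
  obtain D where D: "D 0 = f" "\<And>k x. (D k has_real_derivative D (Suc k) x) (at x)"
    using assms unfolding infinitely_differentiable_def by blast
  show ?thesis using iterated_deriv_eq[OF D, of k] D(2)[of k x]
    by (auto simp: real_differentiable_def)
qed

lemma infinitely_differentiable_has_real_derivative:
  "infinitely_differentiable f \<Longrightarrow> (f has_real_derivative deriv f x) (at x)"
  using infinitely_differentiable_iterated_deriv[of f 0 x]
  by (simp add: DERIV_deriv_iff_real_differentiable)

lemma infinitely_differentiable_deriv:
  assumes "infinitely_differentiable f"
  shows "infinitely_differentiable (deriv f)"
proof -
  obtain D where D: "D 0 = f" "\<And>k x. (D k has_real_derivative D (Suc k) x) (at x)"
    using assms unfolding infinitely_differentiable_def by blast
  have "deriv f = D 1" using iterated_deriv_eq[OF D, of 1] by simp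
  then show ?thesis unfolding infinitely_differentiable_def
    by (intro exI[of _ "\<lambda>k. D (Suc k)"]) (auto intro: D)
qed

lemma infinitely_differentiable_continuous_on:
  "infinitely_differentiable f \<Longrightarrow> continuous_on S f"
  by (meson DERIV_isCont continuous_at_imp_continuous_on
      infinitely_differentiable_has_real_derivative)

lemma infinitely_differentiable_compose_affine:
  assumes "infinitely_differentiable f"
  shows "infinitely_differentiable (\<lambda>x. f (a * x + b))"
proof -
  obtain D where D: "D 0 = f" "\<And>k x. (D k has_real_derivative D (Suc k) x) (at x)"
    using assms unfolding infinitely_differentiable_def by blast
  have "((\<lambda>x. a^k * D k (a*x+b)) has_real_derivative a^(Suc k) * D (Suc k) (a*x+b)) (at x)" for k x
  proof -
    have "((\<lambda>x. D k (a*x+b)) has_real_derivative D (Suc k) (a*x+b) * a) (at x)"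
      by (rule DERIV_chain2[OF D(2)]) (auto intro!: derivative_eq_intros)
    then show ?thesis by (auto intro!: derivative_eq_intros)
  qed
  then show ?thesis unfolding infinitely_differentiable_def
    by (intro exI[of _ "\<lambda>k x. a^k * D k (a*x+b)"]) (auto simp: D(1))
qed

lemma infinitely_differentiable_lincomb:
  assumes "infinitely_differentiable f" "infinitely_differentiable g"
  shows "infinitely_differentiable (\<lambda>x. c * f x + e * g x)"
proof -
  obtain D where D: "D 0 = f" "\<And>k x. (D k has_real_derivative D (Suc k) x) (at x)"
    using assms unfolding infinitely_differentiable_def by blast
  obtain E where E: "E 0 = g" "\<And>k x. (E k has_real_derivative E (Suc k) x) (at x)"
    using assms unfolding infinitely_differentiable_def by blast
  show ?thesis unfolding infinitely_differentiable_def
    by (intro exI[of _ "\<lambda>k x. c * D k x + e * E k x"])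
       (auto simp: D(1) E(1) intro!: derivative_eq_intros D(2) E(2))
qed

lemma infinitely_differentiable_cmult:
  "infinitely_differentiable f \<Longrightarrow> infinitely_differentiable (\<lambda>x. c * f x)"
  using infinitely_differentiable_lincomb[of f f c 0] by simp

lemma infinitely_differentiable_diff:
  "infinitely_differentiable f \<Longrightarrow> infinitely_differentiable g \<Longrightarrow>
     infinitely_differentiable (\<lambda>x. f x - g x)"
  using infinitely_differentiable_lincomb[of f g 1 "-1"] by simp

lemma integral_from_has_real_derivative:
  fixes f :: "real \<Rightarrow> real"
  assumes "continuous_on UNIV f" "\<And>x. x \<le> c \<Longrightarrow> f x = 0"
  shows "((\<lambda>x. integral {c..x} f) has_real_derivative f x) (at x)"
proof -
  define A where "A = min c (x - 1)"
  have "integral {c..t} f = integral {A..t} f" for t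
  proof (cases "t \<le> c")
    case True
    then show ?thesis
      using integral_cong[of "{c..t}" f "\<lambda>_. 0"] integral_cong[of "{A..t}" f "\<lambda>_. 0"] assms(2)
      by (auto simp: A_def)
  next
    case False
    have "integral {A..c} f + integral {c..t} f = integral {A..t} f"
      using Henstock_Kurzweil_Integration.integral_combine[of A c t f] False
        integrable_continuous_real[OF continuous_on_subset[OF assms(1)]]
      by (auto simp: A_def)
    moreover have "integral {A..c} f = 0"
      using integral_cong[of "{A..c}" f "\<lambda>_. 0"] assms(2) by auto
    ultimately show ?thesis by simp
  qed
  moreover have "((\<lambda>u. integral {A..u} f) has_vector_derivative f x) (at x within {A..x+1})"
    by (rule integral_has_vector_derivative[OF continuous_on_subset[OF assms(1)]])
       (auto simp: A_def)
  then have "((\<lambda>u. integral {A..u} f) has_vector_derivative f x) (at x)"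
    by (subst (asm) at_within_interior) (auto simp: A_def)
  ultimately show ?thesis by (simp add: has_real_derivative_iff_has_vector_derivative)
qed

lemma infinitely_differentiable_integral_from:
  assumes "infinitely_differentiable f" "\<And>x. x \<le> c \<Longrightarrow> f x = 0"
  shows "infinitely_differentiable (\<lambda>x. integral {c..x} f)"
proof -
  obtain D where D: "D 0 = f" "\<And>k x. (D k has_real_derivative D (Suc k) x) (at x)"
    using assms unfolding infinitely_differentiable_def by blast
  have "((\<lambda>x. integral {c..x} f) has_real_derivative f x) (at x)" for x
    by (rule integral_from_has_real_derivative)
       (use assms infinitely_differentiable_continuous_on in auto)
  then show ?thesis unfolding infinitely_differentiable_def
    by (intro exI[of _ "\<lambda>k. case k of 0 \<Rightarrow> (\<lambda>x. integral {c..x} f) | Suc j \<Rightarrow> D j"])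
       (use D in \<open>auto split: nat.split\<close>)
qed

definition exp_bump :: "real poly \<Rightarrow> nat \<Rightarrow> real \<Rightarrow> real" where
  "exp_bump p m x =
     (if 0 < x \<and> x < 1 then poly p x * exp (-1 / (x * (1 - x))) / (x * (1 - x))^m else 0)"

text \<open>Since \<open>(x(1-x))' = 1 - 2x\<close>, differentiating \<open>exp_bump p m\<close> gives a function of
  the same shape with \<open>m + 2\<close> and the following polynomial.\<close>
definition exp_bump_deriv_poly :: "real poly \<Rightarrow> nat \<Rightarrow> real poly" where
  "exp_bump_deriv_poly p m =
     pderiv p * [:0,1,-1:]^2 - smult (real m) (p * [:1,-2:] * [:0,1,-1:]) + p * [:1,-2:]"

lemma exp_bump_has_real_derivative_interior:
  assumes x: "0 < x" "x < 1"
  shows "(exp_bump p m has_real_derivative exp_bump (exp_bump_deriv_poly p m) (m+2) x) (at x)"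
proof -
  define w where "w = x * (1 - x)"
  have w0: "w > 0" using x by (simp add: w_def)
  have e: "((\<lambda>t. exp (-1 / (t * (1 - t)))) has_real_derivative exp (-1/w) * ((1-2*x)/w^2)) (at x)"
    using w0 unfolding w_def
    by (auto intro!: derivative_eq_intros) (simp add: divide_simps power2_eq_square algebra_simps)
  have pw: "((\<lambda>t. (t * (1 - t))^m) has_real_derivative real m * w^m * (1-2*x) / w) (at x)"
  proof -
    have "((\<lambda>t. (t * (1 - t))^m) has_real_derivative real m * w^(m - 1) * (1-2*x)) (at x)"
      unfolding w_def by (auto intro!: derivative_eq_intros)
    moreover have "real m * w^(m - 1) = real m * w^m / w"
      using w0 by (cases m) auto
    ultimately show ?thesis by simp
  qed
  have "((\<lambda>t. poly p t * exp (-1 / (t * (1 - t))) / (t * (1 - t))^m) has_real_derivative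
     ((poly (pderiv p) x * exp (-1 / (x * (1 - x))) + exp (-1/w) * ((1-2*x)/w^2) * poly p x)
       * (x * (1 - x))^m - poly p x * exp (-1 / (x * (1 - x))) * (real m * w^m * (1-2*x) / w))
       / ((x * (1 - x))^m * (x * (1 - x))^m)) (at x)"
    by (rule DERIV_divide[OF DERIV_mult[OF poly_DERIV e] pw]) (use x in simp)
  moreover have "poly (exp_bump_deriv_poly p m) x
      = poly (pderiv p) x * w^2 - real m * (poly p x * (1-2*x) * w) + poly p x * (1-2*x)"
    by (simp add: exp_bump_deriv_poly_def w_def algebra_simps power2_eq_square)
  moreover have "((P' * E + E * (c/w^2) * P) * w^m - P * E * (real m * w^m * c / w)) / (w^m * w^m)
      = (P' * w^2 - real m * (P * c * w) + P * c) * E / w^(m+2)" for P' E c P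
    using w0 by (simp add: field_simps power2_eq_square power_add)
  ultimately have "((\<lambda>t. poly p t * exp (-1 / (t * (1 - t))) / (t * (1 - t))^m)
      has_real_derivative exp_bump (exp_bump_deriv_poly p m) (m+2) x) (at x)"
    using x by (simp add: exp_bump_def w_def)
  then show ?thesis
    by (elim has_field_derivative_transform_within_open[where S="{0<..<1}"])
       (use x in \<open>auto simp: exp_bump_def\<close>)
qed

lemma exp_bump_reflect: "exp_bump p m x = exp_bump (pcompose p [:1,-1:]) m (1 - x)"
  by (simp add: exp_bump_def poly_pcompose mult.commute)

lemma exp_bump_has_real_derivative_0: "(exp_bump p m has_real_derivative 0) (at 0)"
proof -
  have "continuous_on {0..1::real} (poly p)"
    by (intro continuous_intros)
  then obtain C where C: "\<And>x. x \<in> {0..1} \<Longrightarrow> \<bar>poly p x\<bar> \<le> C"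
    using continuous_on_compact_bound[of "{0..1::real}" "poly p"] by auto
  have w_lim: "filterlim (\<lambda>h::real. h * (1 - h)) (at_right 0) (at_right 0)"
    unfolding filterlim_at
    by (auto simp: eventually_at_right_field intro!: exI[of _ 1] tendsto_eq_intros)
  have "((\<lambda>t::real. (1/t)^(m+1) * exp (-1/t)) \<longlongrightarrow> 0) (at_right 0)"
  proof -
    have "((\<lambda>t::real. (inverse t)^(m+1) / exp (inverse t)) \<longlongrightarrow> 0) (at_right 0)"
      using filterlim_compose[OF tendsto_power_div_exp_0[of "m+1"] filterlim_inverse_at_top_right]
      by (simp del: power_Suc)
    then show ?thesis by (simp add: exp_minus field_simps del: power_Suc)
  qed
  from tendsto_mult_left[OF filterlim_compose[OF this w_lim], of C]
  have bound_lim: "((\<lambda>h. C * ((1/(h * (1 - h)))^(m+1) * exp (-1/(h * (1 - h))))) \<longlongrightarrow> 0)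
      (at_right 0)"
    by simp
  have R: "((\<lambda>h. exp_bump p m h / h) \<longlongrightarrow> 0) (at_right 0)"
  proof (rule Lim_null_comparison[OF _ bound_lim])
    show "\<forall>\<^sub>F h in at_right 0.
        norm (exp_bump p m h / h) \<le> C * ((1/(h * (1 - h)))^(m+1) * exp (-1/(h * (1 - h))))"
      unfolding eventually_at_right_field
    proof (intro exI[of _ 1] conjI allI impI)
      fix h :: real assume h: "0 < h" "h < 1"
      define w where "w = h * (1 - h)"
      have w: "0 < w" "w \<le> h" using h by (auto simp: w_def mult_le_cancel_left1)
      have "norm (exp_bump p m h / h) = \<bar>poly p h\<bar> * exp (-1/w) / (w^m * h)"
        using h by (simp add: exp_bump_def abs_mult w_def)
      also have "\<dots> \<le> C * exp (-1/w) / (w^m * w)"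
        using h w C[of h] by (intro frac_le mult_right_mono mult_left_mono) auto
      also have "\<dots> = C * ((1/w)^(m+1) * exp (-1/w))"
        using w by (simp add: field_simps power_add)
      finally show "norm (exp_bump p m h / h)
          \<le> C * ((1/(h * (1 - h)))^(m+1) * exp (-1/(h * (1 - h))))"
        by (simp add: w_def)
    qed simp
  qed
  have "((\<lambda>h. exp_bump p m h / h) \<longlongrightarrow> 0) (at_left 0)"
    by (rule Lim_transform_eventually[OF tendsto_const])
       (auto simp: eventually_at_left_field exp_bump_def intro!: exI[of _ "-1"])
  with R have "((\<lambda>h. exp_bump p m h / h) \<longlongrightarrow> 0) (at 0)"
    by (simp add: filterlim_at_split)
  then show ?thesis unfolding DERIV_def by (simp add: exp_bump_def)
qed

lemma exp_bump_has_real_derivative_1: "(exp_bump p m has_real_derivative 0) (at 1)"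
proof -
  have "((\<lambda>x. exp_bump (pcompose p [:1,-1:]) m (1 - x)) has_real_derivative 0 * -1) (at 1)"
    by (rule DERIV_chain2[of "exp_bump (pcompose p [:1,-1:]) m"])
       (auto intro!: derivative_eq_intros exp_bump_has_real_derivative_0[simplified])
  then show ?thesis by (simp flip: exp_bump_reflect)
qed

lemma exp_bump_has_real_derivative:
  "(exp_bump p m has_real_derivative exp_bump (exp_bump_deriv_poly p m) (m+2) x) (at x)"
proof -
  consider "x \<le> 0 \<or> 1 \<le> x" | "0 < x \<and> x < 1" by linarith
  then show ?thesis
  proof cases
    case outside: 1
    consider "x < 0" | "x = 0" | "x = 1" | "x > 1" using outside by linarith
    then have "(exp_bump p m has_real_derivative 0) (at x)"
    proof cases
      case 1 then show ?thesis
        by (intro has_field_derivative_transform_within_open[OF DERIV_const, where S="{..<0}"])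
           (auto simp: exp_bump_def)
    next
      case 4 then show ?thesis
        by (intro has_field_derivative_transform_within_open[OF DERIV_const, where S="{1<..}"])
           (auto simp: exp_bump_def)
    qed (simp_all add: exp_bump_has_real_derivative_0 exp_bump_has_real_derivative_1)
    moreover have "exp_bump (exp_bump_deriv_poly p m) (m+2) x = 0"
      using outside by (auto simp: exp_bump_def)
    ultimately show ?thesis by simp
  qed (use exp_bump_has_real_derivative_interior in blast)
qed

lemma infinitely_differentiable_exp_bump: "infinitely_differentiable (exp_bump p m)"
proof -
  define step where "step = (\<lambda>(p, m). (exp_bump_deriv_poly p m, m + 2))"
  define D where "D k = (case (step ^^ k) (p, m) of (p', m') \<Rightarrow> exp_bump p' m')" for k
  have "(D k has_real_derivative D (Suc k) x) (at x)" for k x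
    using exp_bump_has_real_derivative
    by (simp add: D_def step_def split: prod.split)
  then show ?thesis unfolding infinitely_differentiable_def
    by (intro exI[of _ D]) (simp add: D_def)
qed

definition ramp :: "(real \<Rightarrow> real) \<Rightarrow> real \<Rightarrow> real" where
  "ramp f s = integral {0..s} f / integral {0..1} f"

definition plateau :: "(real \<Rightarrow> real) \<Rightarrow> real \<Rightarrow> real \<Rightarrow> real \<Rightarrow> real \<Rightarrow> real" where
  "plateau f a L b x = ramp f ((x - a) / L) - ramp f ((x - b) / L)"

locale bump_profile =
  fixes f :: "real \<Rightarrow> real"
  assumes infinitely_differentiable: "infinitely_differentiable f"
    and vanishes: "\<And>x. x \<le> 0 \<or> 1 \<le> x \<Longrightarrow> f x = 0"
    and nonneg: "\<And>x. 0 \<le> f x"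
    and integral_pos: "0 < integral {0..1} f"
begin

lemma integrable: "f integrable_on {a..b}"
  by (intro integrable_continuous_real infinitely_differentiable_continuous_on
      infinitely_differentiable)

lemma infinitely_differentiable_ramp: "infinitely_differentiable (ramp f)"
  using infinitely_differentiable_cmult[OF infinitely_differentiable_integral_from,
      of f 0 "1 / integral {0..1} f"]
  by (simp add: ramp_def[abs_def] infinitely_differentiable vanishes)

lemma ramp_has_real_derivative:
  "(ramp f has_real_derivative f x / integral {0..1} f) (at x)"
  unfolding ramp_def[abs_def]
  by (intro DERIV_cdivide integral_from_has_real_derivative infinitely_differentiable_continuous_on
      infinitely_differentiable) (simp add: vanishes)

lemma ramp_eq_0: "s \<le> 0 \<Longrightarrow> ramp f s = 0"
  using integral_cong[of "{0..s}" f "\<lambda>_. 0"] vanishes by (simp add: ramp_def)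

lemma ramp_eq_1:
  assumes "1 \<le> s" shows "ramp f s = 1"
proof -
  have "integral {0..1} f + integral {1..s} f = integral {0..s} f"
    using Henstock_Kurzweil_Integration.integral_combine[of 0 1 s f] assms integrable by auto
  moreover have "integral {1..s} f = 0"
    using integral_cong[of "{1..s}" f "\<lambda>_. 0"] vanishes by simp
  ultimately show ?thesis using integral_pos by (simp add: ramp_def)
qed

lemma ramp_nonneg: "0 \<le> ramp f s"
  unfolding ramp_def using integral_pos
  by (intro divide_nonneg_pos integral_nonneg integrable nonneg) auto

lemma ramp_le_1: "ramp f s \<le> 1"
proof (cases "s \<le> 1")
  case True
  have "integral {0..s} f \<le> integral {0..1} f"
    by (rule integral_subset_le) (use True in \<open>auto intro: integrable nonneg\<close>)
  then show ?thesis using integral_pos by (simp add: ramp_def)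
qed (simp add: ramp_eq_1)

lemma ramp_affine_has_real_derivative:
  assumes "0 < L"
  shows "((\<lambda>x. ramp f ((x - a) / L)) has_real_derivative
           f ((x - a) / L) / (integral {0..1} f * L)) (at x)"
proof -
  have "((\<lambda>x. ramp f ((x - a) / L)) has_real_derivative
           f ((x - a) / L) / integral {0..1} f * (1 / L)) (at x)"
    by (rule DERIV_chain2[OF ramp_has_real_derivative])
       (use assms in \<open>auto intro!: derivative_eq_intros\<close>)
  then show ?thesis by simp
qed

lemma ramp_affine_has_integral:
  assumes "0 < L" "0 \<le> a" "a + L \<le> 1"
  shows "((\<lambda>x. f ((x - a) / L) / (integral {0..1} f * L)) has_integral 1) {0..1}"
proof -
  have "((\<lambda>x. f ((x - a) / L) / (integral {0..1} f * L)) has_integral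
          ramp f ((1 - a) / L) - ramp f ((0 - a) / L)) {0..1}"
    by (rule fundamental_theorem_of_calculus)
       (auto simp: has_real_derivative_iff_has_vector_derivative[symmetric]
         intro!: DERIV_subset[OF ramp_affine_has_real_derivative] assms)
  moreover have "1 \<le> (1 - a) / L" "(0 - a) / L \<le> 0"
    using assms by (auto simp: field_simps divide_le_0_iff)
  ultimately show ?thesis by (simp add: ramp_eq_0 ramp_eq_1)
qed

context
  fixes a L b :: real
  assumes L: "0 < L" and a_b: "a + L \<le> b"
begin

lemma infinitely_differentiable_plateau: "infinitely_differentiable (plateau f a L b)"
proof -
  have "infinitely_differentiable (\<lambda>x. ramp f ((1/L) * x + (- c/L)))" for c
    by (rule infinitely_differentiable_compose_affine[OF infinitely_differentiable_ramp])
  moreover have "(\<lambda>x. ramp f ((1/L) * x + (- c/L))) = (\<lambda>x. ramp f ((x - c) / L))" for c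
    using L by (auto simp: field_simps)
  ultimately show ?thesis
    unfolding plateau_def[abs_def] by (metis infinitely_differentiable_diff)
qed

lemma plateau_eq_0: "x \<le> a \<or> b + L \<le> x \<Longrightarrow> plateau f a L b x = 0"
  using L a_b
  by (auto simp: plateau_def ramp_eq_0 ramp_eq_1 field_simps divide_le_0_iff)

lemma plateau_eq_1: "a + L \<le> x \<Longrightarrow> x \<le> b \<Longrightarrow> plateau f a L b x = 1"
  using L by (auto simp: plateau_def ramp_eq_0 ramp_eq_1 field_simps divide_le_0_iff)

lemma plateau_nonneg: "0 \<le> plateau f a L b x"
  using L a_b ramp_nonneg[of "(x - a) / L"] ramp_le_1[of "(x - a) / L"]
    ramp_nonneg[of "(x - b) / L"] ramp_le_1[of "(x - b) / L"]
  by (cases "x \<le> b") (auto simp: plateau_def ramp_eq_0 ramp_eq_1 field_simps divide_le_0_iff)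

lemma plateau_le_1: "plateau f a L b x \<le> 1"
  using L a_b ramp_nonneg[of "(x - a) / L"] ramp_le_1[of "(x - a) / L"]
    ramp_nonneg[of "(x - b) / L"] ramp_le_1[of "(x - b) / L"]
  by (cases "x \<le> b") (auto simp: plateau_def ramp_eq_0 ramp_eq_1 field_simps divide_le_0_iff)

lemma deriv_plateau:
  "deriv (plateau f a L b) x
     = f ((x - a) / L) / (integral {0..1} f * L) - f ((x - b) / L) / (integral {0..1} f * L)"
  unfolding plateau_def[abs_def]
  by (intro DERIV_imp_deriv DERIV_diff ramp_affine_has_real_derivative L)

text \<open>The up- and down-slopes of a plateau do not overlap, so \<open>(deriv plateau)\<^sup>2\<close> is
  bounded by the sum of the two (normalised) slopes times their maximum.\<close>
lemma plateau_energy: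
  assumes "0 \<le> a" "b + L \<le> 1" "\<And>x. f x \<le> M"
  shows "integral {0..1} (\<lambda>x. (deriv (plateau f a L b) x)^2) \<le> 2 * M / (integral {0..1} f * L)"
proof -
  define I where "I = integral {0..1} f"
  define \<psi> where "\<psi> c x = f ((x - c) / L) / (I * L)" for c x
  have "(\<psi> c has_integral 1) {0..1}" if "0 \<le> c" "c + L \<le> 1" for c
    unfolding \<psi>_def I_def by (rule ramp_affine_has_integral[OF L that])
  then have \<psi>_int: "(\<psi> a has_integral 1) {0..1}" "(\<psi> b has_integral 1) {0..1}"
    using assms a_b L by auto
  have \<psi>_nonneg: "0 \<le> \<psi> c x" for c x
    using integral_pos L nonneg by (simp add: \<psi>_def I_def)
  have \<psi>_le: "\<psi> c x \<le> M / (I * L)" for c x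
    unfolding \<psi>_def I_def using integral_pos L assms(3) by (intro divide_right_mono) auto
  have \<psi>_disjoint: "\<psi> a x * \<psi> b x = 0" for x
  proof (cases "(x - a) / L < 1")
    case True
    then have "(x - b) / L \<le> 0" using L a_b by (simp add: field_simps divide_le_0_iff)
    then show ?thesis by (simp add: \<psi>_def vanishes)
  qed (simp add: \<psi>_def vanishes)
  have pointwise: "(deriv (plateau f a L b) x)^2 \<le> M / (I * L) * (\<psi> a x + \<psi> b x)" for x
  proof -
    have "(deriv (plateau f a L b) x)^2 = (\<psi> a x)^2 + (\<psi> b x)^2"
      using \<psi>_disjoint[of x] by (simp add: deriv_plateau \<psi>_def I_def power2_diff)
    also have "\<dots> \<le> M / (I * L) * \<psi> a x + M / (I * L) * \<psi> b x"
      unfolding power2_eq_square by (intro add_mono mult_right_mono \<psi>_le \<psi>_nonneg)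
    finally show ?thesis by (simp add: distrib_left)
  qed
  have bound_integral:
    "((\<lambda>x. M / (I * L) * (\<psi> a x + \<psi> b x)) has_integral M / (I * L) * (1 + 1)) {0..1}"
    by (intro has_integral_mult_right has_integral_add \<psi>_int)
  have "(\<lambda>x. (deriv (plateau f a L b) x)^2) integrable_on {0..1}"
    by (intro integrable_continuous_real continuous_intros infinitely_differentiable_continuous_on
        infinitely_differentiable_deriv infinitely_differentiable_plateau)
  from has_integral_le[OF integrable_integral[OF this] bound_integral pointwise]
  show ?thesis by (simp add: I_def mult.commute)
qed

end

end

text \<open>A profile with maximum 1 and integral at least 3/4, so that the slopes of the plateaus
  built from it have small energy (see \<open>plateau_energy\<close>); for \<open>exp_bump 1 0\<close> itself
  this ratio is not controlled.\<close>
definition flat_bump :: "real \<Rightarrow> real" where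
  "flat_bump = plateau (exp_bump 1 0) 0 (1/8) (7/8)"

interpretation exp_bump: bump_profile "exp_bump 1 0"
proof
  show "infinitely_differentiable (exp_bump 1 0)" by (rule infinitely_differentiable_exp_bump)
  show "exp_bump 1 0 x = 0" if "x \<le> 0 \<or> 1 \<le> x" for x using that by (auto simp: exp_bump_def)
  show "0 \<le> exp_bump 1 0 x" for x by (simp add: exp_bump_def)
  have cont: "continuous_on {0..1} (exp_bump 1 0)"
    by (intro infinitely_differentiable_continuous_on infinitely_differentiable_exp_bump)
  have "integral {0..1} (exp_bump 1 0) \<noteq> 0"
  proof
    assume "integral {0..1} (exp_bump 1 0) = 0"
    then have "(exp_bump 1 0 has_integral 0) (cbox 0 1)"
      using integrable_continuous_real[OF cont] by (metis cbox_interval has_integral_integral)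
    then have "exp_bump 1 0 (1/2) = 0"
      using cont by (intro has_integral_0_cbox_imp_0[of 0 1 "exp_bump 1 0"]) (auto simp: exp_bump_def)
    then show False by (simp add: exp_bump_def)
  qed
  moreover have "0 \<le> integral {0..1} (exp_bump 1 0)"
    by (intro integral_nonneg integrable_continuous_real cont) (simp add: exp_bump_def)
  ultimately show "0 < integral {0..1} (exp_bump 1 0)" by simp
qed

lemma flat_bump_eq_1: "1/8 \<le> x \<Longrightarrow> x \<le> 7/8 \<Longrightarrow> flat_bump x = 1"
  unfolding flat_bump_def by (rule exp_bump.plateau_eq_1) auto

lemma flat_bump_le_1: "flat_bump x \<le> 1"
  unfolding flat_bump_def by (rule exp_bump.plateau_le_1) auto

lemma infinitely_differentiable_flat_bump: "infinitely_differentiable flat_bump"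
  unfolding flat_bump_def by (rule exp_bump.infinitely_differentiable_plateau) auto

lemma flat_bump_integral_ge: "3/4 \<le> integral {0..1} flat_bump"
proof -
  have "integral {1/8..7/8} flat_bump \<le> integral {0..1} flat_bump"
    unfolding flat_bump_def
    by (rule integral_subset_le)
       (auto intro!: integrable_continuous_real infinitely_differentiable_continuous_on
         exp_bump.infinitely_differentiable_plateau exp_bump.plateau_nonneg)
  moreover have "integral {1/8..7/8} flat_bump = integral {1/8..7/8::real} (\<lambda>_. 1)"
    by (rule integral_cong) (auto simp: flat_bump_eq_1)
  ultimately show ?thesis by simp
qed

interpretation flat_bump: bump_profile flat_bump
  using flat_bump_integral_ge infinitely_differentiable_flat_bump
  by unfold_locales (auto simp: flat_bump_def intro: exp_bump.plateau_eq_0 exp_bump.plateau_nonneg)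

section \<open>Test functions and the norm \<open>\<parallel>q\<parallel>\<^sub>m\<close>\<close>

lemma smooth_compactD:
  assumes "smooth_compact A B f"
  shows "(f has_real_derivative deriv f x) (at x)" "continuous_on S f" "continuous_on S (deriv f)"
proof -
  have "\<forall>k x. (deriv ^^ k) f differentiable (at x)"
    using assms unfolding smooth_compact_def by blast
  from this[rule_format, of 0] this[rule_format, of 1]
  have "f differentiable (at x)" "deriv f differentiable (at x)" for x by simp_all
  then show "(f has_real_derivative deriv f x) (at x)" "continuous_on S f" "continuous_on S (deriv f)"
    by (auto simp: DERIV_deriv_iff_real_differentiable
        intro!: continuous_at_imp_continuous_on differentiable_imp_continuous_within)
qed

lemma smooth_compact_vanishes_at_0: "smooth_compact A B f \<Longrightarrow> 0 < A \<Longrightarrow> f 0 = 0"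
  unfolding smooth_compact_def by force

text \<open>A pointwise bound from the energy: \<open>\<bar>f x\<bar> \<le> \<integral>\<^sub>0\<^sup>x \<bar>f'\<bar> \<le> \<integral>\<^sub>0\<^sup>1 (1 + f'\<^sup>2) / 2\<close>.\<close>
lemma smooth_compact_abs_le:
  assumes "smooth_compact A B f" "0 < A" "x \<in> {0..1}"
  shows "\<bar>f x\<bar> \<le> 1/2 + (LINT t:{0..1}|lborel. (deriv f t)^2) / 2"
proof -
  note f = smooth_compactD[OF assms(1)]
  define G where "G t = 1/2 + (1/2) * (deriv f t)^2" for t
  have G_int: "G integrable_on {a..b}" for a b
    unfolding G_def by (intro integrable_continuous_real continuous_intros f)
  have "(deriv f has_integral (f x - f 0)) {0..x}"
    by (rule fundamental_theorem_of_calculus)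
       (use assms(3) in \<open>auto simp flip: has_real_derivative_iff_has_vector_derivative
         intro: has_field_derivative_at_within f\<close>)
  then have "f x = integral {0..x} (deriv f)"
    using smooth_compact_vanishes_at_0[OF assms(1,2)] by (simp add: integral_unique)
  also have "norm \<dots> \<le> integral {0..x} G"
  proof (rule integral_norm_bound_integral)
    show "norm (deriv f t) \<le> G t" for t
      using zero_le_square[of "\<bar>deriv f t\<bar> - 1"] by (simp add: G_def power2_eq_square algebra_simps)
  qed (auto intro!: G_int integrable_continuous_real f)
  also have "\<dots> \<le> integral {0..1} G"
    by (rule integral_subset_le) (use assms(3) G_int in \<open>auto simp: G_def\<close>)
  also have "\<dots> = 1/2 + (1/2) * integral {0..1} (\<lambda>t. (deriv f t)^2)"
    unfolding G_def
    by (subst integral_add) (auto intro!: integrable_continuous_real continuous_intros f)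
  also have "integral {0..1} (\<lambda>t. (deriv f t)^2) = (LINT t:{0..1}|lborel. (deriv f t)^2)"
    by (intro set_borel_integral_eq_integral(2)[symmetric] borel_integrable_atLeastAtMost'
        continuous_intros f)
  finally show ?thesis by simp
qed

lemma set_integrable_square_diff:
  fixes f g :: "real \<Rightarrow> real"
  assumes "set_integrable lborel {0..1} (\<lambda>x. (f x)^2)" "set_integrable lborel {0..1} (\<lambda>x. (g x)^2)"
    "f \<in> borel_measurable lborel" "g \<in> borel_measurable lborel"
  shows "set_integrable lborel {0..1} (\<lambda>x. (f x - g x)^2)"
  unfolding set_integrable_def
proof (rule Bochner_Integration.integrable_bound)
  show "integrable lborel (\<lambda>x. 2 * (indicator {0..1} x * (f x)^2) + 2 * (indicator {0..1} x * (g x)^2))"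
    using assms(1,2) unfolding set_integrable_def by auto
  show "(\<lambda>x. indicator {0..1} x *\<^sub>R (f x - g x)\<^sup>2) \<in> borel_measurable lborel"
    using assms(3,4) by measurable
  have "(f x - g x)^2 \<le> 2 * (f x)^2 + 2 * (g x)^2" for x
    using zero_le_square[of "f x + g x"] by (simp add: power2_eq_square algebra_simps)
  then show "AE x in lborel. norm (indicator {0..1} x *\<^sub>R (f x - g x)\<^sup>2)
      \<le> norm (2 * (indicator {0..1} x * (f x)^2) + 2 * (indicator {0..1} x * (g x)^2))"
    by (intro AE_I2) (auto simp: indicator_def)
qed

lemma L2_01_set_integrable: "L2_01 f \<Longrightarrow> set_integrable lborel {0..1} (\<lambda>x. (f x)^2)"
  unfolding L2_01_def set_integrable_def by simp

lemma L2_01_continuous: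
  assumes "continuous_on UNIV f"
  shows "L2_01 f"
proof -
  have "set_integrable lborel {0..1::real} (\<lambda>x. (f x)^2)"
    by (intro borel_integrable_atLeastAtMost' continuous_intros continuous_on_subset[OF assms])
       simp
  then show ?thesis
    unfolding L2_01_def set_integrable_def using assms borel_measurable_continuous_onI by auto
qed

lemma L2_sq_le_twice:
  fixes f g :: "real \<Rightarrow> real"
  assumes "L2_01 f" "L2_01 g"
  shows "L2_sq f \<le> 2 * L2_sq g + 2 * L2_sq (\<lambda>x. f x - g x)"
proof -
  have f: "set_integrable lborel {0..1} (\<lambda>x. (f x)^2)"
    and g: "set_integrable lborel {0..1} (\<lambda>x. (g x)^2)"
    and fg: "set_integrable lborel {0..1} (\<lambda>x. (f x - g x)^2)"
    using assms L2_01_set_integrable set_integrable_square_diff by (auto simp: L2_01_def)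
  have "L2_sq f \<le> (LINT x:{0..1}|lborel. 2 * (g x)^2 + 2 * (f x - g x)^2)"
    unfolding L2_sq_def
  proof (rule set_integral_mono[OF f])
    show "set_integrable lborel {0..1} (\<lambda>x. 2 * (g x)^2 + 2 * (f x - g x)^2)"
      using g fg by auto
    show "(f x)^2 \<le> 2 * (g x)^2 + 2 * (f x - g x)^2" for x
      using zero_le_square[of "f x - 2 * g x"] by (simp add: power2_eq_square algebra_simps)
  qed
  also have "\<dots> = 2 * L2_sq g + 2 * L2_sq (\<lambda>x. f x - g x)"
    using g fg by (simp add: L2_sq_def)
  finally show ?thesis .
qed

lemma mult_le_via_approximation:
  fixes q y f :: real
  assumes "\<bar>q\<bar> \<le> Qm" "\<bar>f\<bar> \<le> C" "0 \<le> Qm"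
  shows "q * y \<le> (Qm * C + Qm^2 / 2) + (1/2) * (f - y)^2"
proof -
  have "q * y \<le> \<bar>q\<bar> * \<bar>f\<bar> + \<bar>q\<bar> * \<bar>y - f\<bar>"
    by (simp add: algebra_simps abs_mult[symmetric] order_trans[OF _ abs_triangle_ineq[of "q * f"]])
  also have "\<bar>q\<bar> * \<bar>f\<bar> \<le> Qm * C"
    using assms by (intro mult_mono) auto
  also have "\<bar>q\<bar> * \<bar>y - f\<bar> \<le> (\<bar>q\<bar>^2 + (y - f)^2) / 2"
    using zero_le_square[of "\<bar>q\<bar> - \<bar>y - f\<bar>"] by (simp add: power2_eq_square algebra_simps)
  also have "\<bar>q\<bar>^2 \<le> Qm^2" using assms by (intro power_mono) auto
  finally show ?thesis by (simp add: power2_commute[of y] divide_simps)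
qed

text \<open>Approximate \<open>y\<close> by a test function \<open>\<phi>\<close> with \<open>\<parallel>\<phi> - y\<parallel>\<^sup>2 < 1\<close> and
  \<open>\<parallel>\<phi>' - g\<parallel>\<^sup>2 < 1\<close>; then \<open>\<bar>\<phi>\<bar> \<le> 5/2\<close>.\<close>
lemma W0_integral_le:
  fixes q y g :: "real \<Rightarrow> real"
  assumes q: "\<forall>x\<in>{0<..<1}. \<bar>q x\<bar> \<le> Qm" and Qm: "0 \<le> Qm" and A: "0 < A"
    and W: "W0 A B y g" and g: "L2_sq g \<le> 1"
  shows "(LINT x:{0..1}|lborel. q x * y x) \<le> Qm * (5/2) + Qm^2 / 2 + 1/2"
proof (cases "set_integrable lborel {0..1} (\<lambda>x. q x * y x)")
  case False
  then show ?thesis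
    using Qm by (simp add: set_lebesgue_integral_def set_integrable_def not_integrable_integral_eq)
next
  case qy: True
  obtain \<phi> where \<phi>: "\<And>k. smooth_compact A B (\<phi> k)"
    and lim: "(\<lambda>k. L2_sq (\<lambda>x. \<phi> k x - y x)) \<longlonglongrightarrow> 0"
      "(\<lambda>k. L2_sq (\<lambda>x. deriv (\<phi> k) x - g x)) \<longlonglongrightarrow> 0"
    and y: "L2_01 y" and L2g: "L2_01 g"
    using W unfolding W0_def by blast
  obtain k where k: "L2_sq (\<lambda>x. \<phi> k x - y x) < 1" "L2_sq (\<lambda>x. deriv (\<phi> k) x - g x) < 1"
    using eventually_conj[OF order_tendstoD(2)[OF lim(1) zero_less_one]
        order_tendstoD(2)[OF lim(2) zero_less_one]]
    unfolding eventually_sequentially by auto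
  define f where "f = \<phi> k"
  note f = smooth_compactD[OF \<phi>[of k, folded f_def]]
  have "L2_sq (deriv f) \<le> 2 * L2_sq g + 2 * L2_sq (\<lambda>x. deriv f x - g x)"
    by (intro L2_sq_le_twice L2_01_continuous f L2g)
  then have "L2_sq (deriv f) \<le> 4"
    using g k(2) by (simp add: f_def)
  then have f_le: "\<bar>f x\<bar> \<le> 5/2" if "x \<in> {0..1}" for x
    using smooth_compact_abs_le[OF \<phi>[of k, folded f_def] A that] by (simp add: L2_sq_def)
  have fy: "set_integrable lborel {0..1} (\<lambda>x. (f x - y x)^2)"
    using y L2_01_continuous[OF f(2)]
    by (intro set_integrable_square_diff L2_01_set_integrable) (auto simp: L2_01_def)
  have const: "set_integrable lborel {0..1::real} (\<lambda>x. c)" for c :: real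
    by (intro borel_integrable_atLeastAtMost') simp
  have "(LINT x:{0..1}|lborel. q x * y x)
      \<le> (LINT x:{0..1}|lborel. (Qm * (5/2) + Qm^2/2) + (1/2) * (f x - y x)^2)"
  proof (rule set_integral_mono_AE[OF qy])
    show "set_integrable lborel {0..1} (\<lambda>x. (Qm * (5/2) + Qm^2/2) + (1/2) * (f x - y x)^2)"
      using const fy by auto
    have "AE x in lborel. x \<noteq> 0" "AE x in lborel. x \<noteq> 1" by (rule AE_lborel_singleton)+
    then show "AE x\<in>{0..1} in lborel. q x * y x \<le> (Qm * (5/2) + Qm^2/2) + (1/2) * (f x - y x)^2"
    proof eventually_elim
      case (elim x)
      show ?case using q f_le Qm elim by (intro impI mult_le_via_approximation) auto
    qed
  qed
  also have "\<dots> = (Qm * (5/2) + Qm^2/2) + (1/2) * L2_sq (\<lambda>x. \<phi> k x - y x)"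
    using const fy by (simp add: L2_sq_def f_def set_integral_const)
  also have "\<dots> \<le> Qm * (5/2) + Qm^2 / 2 + 1/2" using k(1) by simp
  finally show ?thesis .
qed

lemma qnorm_set_bdd_above:
  assumes "\<forall>x\<in>{0<..<1}. \<bar>q x\<bar> \<le> Qm" "0 \<le> Qm"
  shows "bdd_above {LINT x:{0..1}|lborel. q x * y x | y g.
           W0 (1 / 2 ^ m) (1 - 1 / 2 ^ m) y g \<and> L2_sq g \<le> 1}"
proof (rule bdd_aboveI[where M="Qm * (5/2) + Qm^2 / 2 + 1/2"], clarify)
  fix y g :: "real \<Rightarrow> real"
  assume "W0 (1 / 2 ^ m) (1 - 1 / 2 ^ m) y g" "L2_sq g \<le> 1"
  then show "(LINT x:{0..1}|lborel. q x * y x) \<le> Qm * (5/2) + Qm^2 / 2 + 1/2"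
    by (intro W0_integral_le[OF assms]) auto
qed

lemma integral_le_qnorm:
  fixes q \<phi> :: "real \<Rightarrow> real"
  assumes q: "\<forall>x\<in>{0<..<1}. \<bar>q x\<bar> \<le> Qm" "0 \<le> Qm"
    and \<phi>: "infinitely_differentiable \<phi>"
    and support: "1 / 2 ^ m < c" "c \<le> d" "d < 1 - 1 / 2 ^ m" "\<And>x. x \<notin> {c..d} \<Longrightarrow> \<phi> x = 0"
    and N: "0 < N" "integral {0..1} (\<lambda>x. (deriv \<phi> x)^2) \<le> N^2"
  shows "(LINT x:{0..1}|lborel. q x * \<phi> x) \<le> N * qnorm q m"
proof -
  define \<psi> where "\<psi> x = \<phi> x / N" for x
  have \<psi>: "infinitely_differentiable \<psi>"
    using infinitely_differentiable_cmult[OF \<phi>, of "1 / N"] by (simp add: \<psi>_def[abs_def])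
  have deriv_\<psi>: "deriv \<psi> x = deriv \<phi> x / N" for x
    unfolding \<psi>_def[abs_def]
    by (intro DERIV_imp_deriv DERIV_cdivide infinitely_differentiable_has_real_derivative \<phi>)
  have "smooth_compact (1 / 2 ^ m) (1 - 1 / 2 ^ m) \<psi>"
    unfolding smooth_compact_def using support
    by (auto simp: \<psi>_def intro!: infinitely_differentiable_iterated_deriv \<psi>)
  then have W: "W0 (1 / 2 ^ m) (1 - 1 / 2 ^ m) \<psi> (deriv \<psi>)"
    unfolding W0_def
    by (auto simp: L2_sq_def intro!: L2_01_continuous infinitely_differentiable_continuous_on
        infinitely_differentiable_deriv \<psi> exI[of _ "\<lambda>_. \<psi>"])
  have "continuous_on S (deriv \<phi>)" for S
    by (intro infinitely_differentiable_continuous_on infinitely_differentiable_deriv \<phi>)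
  with N have "L2_sq (deriv \<psi>) = integral {0..1} (\<lambda>x. (deriv \<phi> x)^2) / N^2"
    unfolding L2_sq_def
    by (subst set_borel_integral_eq_integral(2))
       (auto simp: deriv_\<psi> power_divide intro!: borel_integrable_atLeastAtMost' continuous_intros)
  also have "\<dots> \<le> 1" using N by (simp add: divide_le_eq_1)
  finally have "(LINT x:{0..1}|lborel. q x * \<psi> x) \<le> qnorm q m"
    unfolding qnorm_def using W by (intro cSup_upper qnorm_set_bdd_above[OF q]) auto
  moreover have "(LINT x:{0..1}|lborel. q x * \<psi> x) = (LINT x:{0..1}|lborel. q x * \<phi> x) / N"
    by (simp add: \<psi>_def)
  ultimately show ?thesis using N by (simp add: divide_le_eq mult.commute)
qed

section \<open>Eigenfunctions\<close>

lemma eigfun_deriv_bounded: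
  assumes y: "eigfun q lam y" and q: "\<forall>x\<in>{0<..<1}. \<bar>q x\<bar> \<le> Qm"
  obtains B where "0 \<le> B" "\<And>x. x \<in> {0<..<1} \<Longrightarrow> \<bar>deriv y x\<bar> \<le> B"
proof -
  have cy: "continuous_on {0..1} y"
    and dy: "\<And>x. x \<in> {0<..<1} \<Longrightarrow> (deriv y has_real_derivative (q x - lam) * y x) (at x)"
    using y unfolding eigfun_def by auto
  obtain M where M: "0 \<le> M" "\<And>x. x \<in> {0..1} \<Longrightarrow> \<bar>y x\<bar> \<le> M"
    using continuous_on_compact_bound[OF _ cy] by auto
  define K where "K = (\<bar>Qm\<bar> + \<bar>lam\<bar>) * M"
  have mvt: "\<bar>deriv y b - deriv y a\<bar> \<le> K" if ab: "0 < a" "a < b" "b < 1" for a b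
  proof -
    obtain z where z: "a < z" "z < b" "deriv y b - deriv y a = (b - a) * ((q z - lam) * y z)"
      using MVT2[OF ab(2), of "deriv y" "\<lambda>z. (q z - lam) * y z"] dy ab by force
    have "\<bar>q z\<bar> \<le> Qm" using q z ab by auto
    then have "\<bar>q z - lam\<bar> \<le> \<bar>Qm\<bar> + \<bar>lam\<bar>" by linarith
    then have "\<bar>(q z - lam) * y z\<bar> \<le> K"
      unfolding abs_mult K_def using M z ab by (intro mult_mono) auto
    moreover have "\<bar>b - a\<bar> \<le> 1" using ab by auto
    ultimately show ?thesis
      using z mult_mono[of "\<bar>b - a\<bar>" 1 "\<bar>(q z - lam) * y z\<bar>" K] by (simp add: abs_mult)
  qed
  have "0 \<le> K" using M by (simp add: K_def)
  then have "\<bar>deriv y x - deriv y (1/2)\<bar> \<le> K" if x: "x \<in> {0<..<1}" for x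
  proof (cases x "1/2 :: real" rule: linorder_cases)
    case less then show ?thesis using mvt[of x "1/2"] x by (simp add: abs_minus_commute)
  next
    case greater then show ?thesis using mvt[of "1/2" x] x by simp
  next
    case equal then show ?thesis unfolding equal using \<open>0 \<le> K\<close> by simp
  qed
  then show ?thesis
    using M by (intro that[of "\<bar>deriv y (1/2)\<bar> + K"]) (force simp: K_def)+
qed

lemma eigfun_abs_le:
  assumes y: "eigfun q lam y" and B: "\<And>x. x \<in> {0<..<1} \<Longrightarrow> \<bar>deriv y x\<bar> \<le> B"
    and x: "x \<in> {0<..<1}"
  shows "\<bar>y x\<bar> \<le> B * x" "\<bar>y x\<bar> \<le> B * (1 - x)"
proof -
  have cy: "continuous_on {0..1} y" and y01: "y 0 = 0" "y 1 = 0"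
    and dy: "\<And>x. x \<in> {0<..<1} \<Longrightarrow> y differentiable (at x)"
    using y unfolding eigfun_def by auto
  have deriv_le: "\<bar>l\<bar> \<le> B" if "DERIV y z :> l" "z \<in> {0<..<1}" for z l
    using B[OF that(2)] DERIV_imp_deriv[OF that(1)] by simp
  obtain l z where z: "0 < z" "z < x" "DERIV y z :> l" "y x - y 0 = (x - 0) * l"
    using MVT[of 0 x y] x dy continuous_on_subset[OF cy, of "{0..x}"] by force
  then show "\<bar>y x\<bar> \<le> B * x"
    using x y01 deriv_le[OF z(3)] by (simp add: abs_mult mult.commute mult_right_mono)
  obtain l z where z: "x < z" "z < 1" "DERIV y z :> l" "y 1 - y x = (1 - x) * l"
    using MVT[of x 1 y] x dy continuous_on_subset[OF cy, of "{x..1}"] by force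
  then have "\<bar>y x\<bar> = (1 - x) * \<bar>l\<bar>"
    using y01 by (simp add: abs_mult flip: abs_minus_cancel[of "y x"])
  then show "\<bar>y x\<bar> \<le> B * (1 - x)"
    using x z deriv_le[OF z(3)] by (simp add: mult.commute mult_right_mono)
qed

text \<open>With \<open>w t = 1/(1-t) - 1/t\<close>, the function \<open>y y' + w y\<^sup>2\<close> has derivative
  \<open>(y' + w y)\<^sup>2 + (w' - w\<^sup>2) y\<^sup>2 + (q - \<lambda>) y\<^sup>2\<close>, and \<open>w' - w\<^sup>2 = 2 / (t (1 - t)) \<ge> 8\<close>.
  It vanishes at both ends (as \<open>\<bar>y t\<bar> \<le> B min t (1 - t)\<close>), which forces \<open>\<lambda> \<ge> 8\<close>
  for a normalised eigenfunction.\<close>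
definition picone :: "(real \<Rightarrow> real) \<Rightarrow> real \<Rightarrow> real" where
  "picone y t = (if 0 < t \<and> t < 1 then y t * deriv y t + (1/(1-t) - 1/t) * (y t)^2 else 0)"

definition picone_deriv :: "(real \<Rightarrow> real) \<Rightarrow> real \<Rightarrow> (real \<Rightarrow> real) \<Rightarrow> real \<Rightarrow> real" where
  "picone_deriv q lam y t = (deriv y t)^2 + (q t - lam) * (y t)^2
     + (1/(1-t)^2 + 1/t^2) * (y t)^2 + 2 * (1/(1-t) - 1/t) * y t * deriv y t"

lemma picone_has_real_derivative:
  assumes y: "eigfun q lam y" and t: "t \<in> {0<..<1}"
  shows "(picone y has_real_derivative picone_deriv q lam y t) (at t)"
proof -
  have y': "(y has_real_derivative deriv y t) (at t)"
    and y'': "(deriv y has_real_derivative (q t - lam) * y t) (at t)"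
    using y t by (auto simp: eigfun_def DERIV_deriv_iff_real_differentiable)
  have w': "((\<lambda>t. 1/(1-t) - 1/t) has_real_derivative 1/(1-t)^2 + 1/t^2) (at t)"
    using t by (auto intro!: derivative_eq_intros simp: power2_eq_square)
  have "((\<lambda>t. (y t)^2) has_real_derivative 2 * y t * deriv y t) (at t)"
    by (auto intro!: derivative_eq_intros y')
  from DERIV_add[OF DERIV_mult[OF y' y''] DERIV_mult[OF w' this]]
  have "((\<lambda>t. y t * deriv y t + (1/(1-t) - 1/t) * (y t)^2) has_real_derivative
      picone_deriv q lam y t) (at t)"
    unfolding picone_deriv_def power2_eq_square by (simp only: mult_ac add_ac)
  then show ?thesis
    by (elim has_field_derivative_transform_within_open[where S="{0<..<1}"])
       (use t in \<open>auto simp: picone_def\<close>)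
qed

lemma picone_deriv_ge:
  assumes t: "t \<in> {0<..<1}" and q: "0 \<le> q t"
  shows "(8 - lam) * (y t)^2 \<le> picone_deriv q lam y t"
proof -
  define w where "w = 1/(1-t) - 1/t"
  have "t * (1 - t) \<le> 1/4" using zero_le_square[of "t - 1/2"] by (simp add: power2_eq_square algebra_simps)
  then have "8 \<le> 2 / (t * (1 - t))" using t by (simp add: field_simps)
  also have "(1/a^2 + 1/b^2) - (1/a - 1/b)^2 = 2 / (b * a)" if "a \<noteq> 0" "b \<noteq> 0" for a b :: real
    using that by (simp add: field_simps power2_eq_square)
  from this[of "1 - t" t] t have "2 / (t * (1 - t)) = (1/(1-t)^2 + 1/t^2) - w^2"
    by (simp add: w_def)
  finally have "0 \<le> (deriv y t + w * y t)^2 + ((1/(1-t)^2 + 1/t^2) - w^2 - 8) * (y t)^2 + q t * (y t)^2"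
    using q by (intro add_nonneg_nonneg mult_nonneg_nonneg) auto
  also have "\<dots> = picone_deriv q lam y t - (8 - lam) * (y t)^2"
    by (simp add: picone_deriv_def w_def power2_eq_square algebra_simps)
  finally show ?thesis by simp
qed

lemma picone_abs_le:
  assumes y: "eigfun q lam y" and B: "\<And>x. x \<in> {0<..<1} \<Longrightarrow> \<bar>deriv y x\<bar> \<le> B" "0 \<le> B"
  shows "\<bar>picone y t\<bar> \<le> 2 * B * \<bar>y t\<bar>"
proof (cases "t \<in> {0<..<1}")
  case t: True
  have "\<bar>1/(1-t) - 1/t\<bar> * \<bar>y t\<bar> \<le> B"
  proof (cases "t \<le> 1/2")
    case True
    then have "\<bar>1/(1-t) - 1/t\<bar> \<le> 1/t" using t by (auto simp: field_simps)
    then have "\<bar>1/(1-t) - 1/t\<bar> * \<bar>y t\<bar> \<le> 1/t * (B * t)"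
      using eigfun_abs_le(1)[OF y B(1) t] t by (intro mult_mono) auto
    then show ?thesis using t by simp
  next
    case False
    then have "1/t \<le> 1/(1-t)" "0 < 1/t" using t by (auto intro: divide_left_mono)
    then have "\<bar>1/(1-t) - 1/t\<bar> \<le> 1/(1-t)" by linarith
    then have "\<bar>1/(1-t) - 1/t\<bar> * \<bar>y t\<bar> \<le> 1/(1-t) * (B * (1-t))"
      using eigfun_abs_le(2)[OF y B(1) t] t by (intro mult_mono) auto
    then show ?thesis using t by simp
  qed
  from mult_right_mono[OF this abs_ge_zero[of "y t"]]
  have "\<bar>(1/(1-t) - 1/t) * (y t)^2\<bar> \<le> B * \<bar>y t\<bar>"
    by (simp add: abs_mult power2_eq_square mult.assoc)
  moreover have "\<bar>y t * deriv y t\<bar> \<le> B * \<bar>y t\<bar>"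
    using mult_left_mono[OF B(1)[OF t] abs_ge_zero[of "y t"]] by (simp add: abs_mult mult.commute)
  ultimately show ?thesis
    using t abs_triangle_ineq[of "y t * deriv y t"] by (simp add: picone_def)
qed (use B in \<open>auto simp: picone_def\<close>)

lemma continuous_on_picone:
  assumes y: "eigfun q lam y" and q: "\<forall>x\<in>{0<..<1}. \<bar>q x\<bar> \<le> Qm"
  shows "continuous_on {0..1} (picone y)"
  unfolding continuous_on_eq_continuous_within
proof
  fix t :: real assume t: "t \<in> {0..1}"
  show "continuous (at t within {0..1}) (picone y)"
  proof (cases "t \<in> {0<..<1}")
    case True
    show ?thesis
      using DERIV_isCont[OF picone_has_real_derivative[OF y True]]
      by (rule continuous_at_imp_continuous_within)
  next
    case False
    then have t01: "t = 0 \<or> t = 1" using t by auto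
    obtain B where B: "0 \<le> B" "\<And>x. x \<in> {0<..<1} \<Longrightarrow> \<bar>deriv y x\<bar> \<le> B"
      using eigfun_deriv_bounded[OF y q] by blast
    have "continuous (at t within {0..1}) y"
      using y t by (simp add: eigfun_def continuous_on_eq_continuous_within)
    moreover have "y t = 0" using y t01 by (auto simp: eigfun_def)
    ultimately have "(y \<longlongrightarrow> 0) (at t within {0..1})" by (simp add: continuous_within)
    from tendsto_mult_left[OF tendsto_rabs[OF this], of "2 * B"]
    have "((\<lambda>x. 2 * B * \<bar>y x\<bar>) \<longlongrightarrow> 0) (at t within {0..1})" by simp
    then have "(picone y \<longlongrightarrow> 0) (at t within {0..1})"
      by (rule Lim_null_comparison[rotated]) (use picone_abs_le[OF y B(2,1)] in auto)
    moreover have "picone y t = 0" using t01 by (auto simp: picone_def)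
    ultimately show ?thesis by (simp add: continuous_within)
  qed
qed

lemma eigenvalue_ge_8:
  assumes y: "eigfun q lam y" and q: "\<forall>x\<in>{0<..<1}. 0 \<le> q x" "\<forall>x\<in>{0<..<1}. \<bar>q x\<bar> \<le> Qm"
    and normalised: "integral {0..1} (\<lambda>x. (y x)^2) = 1"
  shows "8 \<le> lam"
proof -
  define D where "D t = (if t \<in> {0<..<1} then picone_deriv q lam y t else (8 - lam) * (y t)^2)" for t
  have "(D has_integral picone y 1 - picone y 0) {0..1}"
    by (rule fundamental_theorem_of_calculus_interior)
       (auto simp: D_def has_real_derivative_iff_has_vector_derivative[symmetric]
         intro!: continuous_on_picone[OF y q(2)] picone_has_real_derivative[OF y])
  then have D: "(D has_integral 0) {0..1}" by (simp add: picone_def)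
  have "continuous_on {0..1} y" using y by (simp add: eigfun_def)
  then have "(\<lambda>x. (y x)^2) integrable_on {0..1}"
    by (intro integrable_continuous_real continuous_intros)
  from has_integral_mult_right[OF integrable_integral[OF this], of "8 - lam"]
  have "((\<lambda>x. (8 - lam) * (y x)^2) has_integral (8 - lam) * 1) {0..1}"
    by (simp add: normalised)
  moreover have "(8 - lam) * (y t)^2 \<le> D t" for t
    using picone_deriv_ge[of t q lam y] q by (auto simp: D_def)
  ultimately have "(8 - lam) * 1 \<le> 0" using has_integral_le[OF _ D] by blast
  then show ?thesis by simp
qed

lemma gronwall_two_sided:
  fixes u Q :: "real \<Rightarrow> real"
  assumes "lo \<le> hi"
    and u: "\<And>x. x \<in> {lo..hi} \<Longrightarrow> (u has_real_derivative u' x) (at x)"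
    and Q: "\<And>x. x \<in> {lo..hi} \<Longrightarrow> (Q has_real_derivative g x) (at x)"
    and bound: "\<And>x. x \<in> {lo..hi} \<Longrightarrow> \<bar>u' x\<bar> \<le> g x * u x"
  shows "u lo \<le> u hi * exp (Q hi - Q lo)" "u hi \<le> u lo * exp (Q hi - Q lo)"
proof -
  have "u lo * exp (Q lo) \<le> u hi * exp (Q hi)"
  proof (rule DERIV_nonneg_imp_nondecreasing[OF \<open>lo \<le> hi\<close>])
    fix x assume "lo \<le> x" "x \<le> hi"
    then have x: "x \<in> {lo..hi}" by simp
    have "0 \<le> exp (Q x) * (u' x + g x * u x)"
      using bound[OF x] by (intro mult_nonneg_nonneg) auto
    moreover have "((\<lambda>x. u x * exp (Q x)) has_real_derivative exp (Q x) * (u' x + g x * u x)) (at x)"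
      using DERIV_mult[OF u[OF x] DERIV_chain2[OF DERIV_exp Q[OF x]]] by (simp add: algebra_simps)
    ultimately show "\<exists>d. ((\<lambda>x. u x * exp (Q x)) has_real_derivative d) (at x) \<and> 0 \<le> d" by blast
  qed
  then show "u lo \<le> u hi * exp (Q hi - Q lo)"
    by (simp add: exp_diff pos_le_divide_eq)
  have "u hi * exp (- Q hi) \<le> u lo * exp (- Q lo)"
  proof (rule DERIV_nonpos_imp_nonincreasing[OF \<open>lo \<le> hi\<close>])
    fix x assume "lo \<le> x" "x \<le> hi"
    then have x: "x \<in> {lo..hi}" by simp
    have "exp (- Q x) * (u' x - g x * u x) \<le> 0"
      using bound[OF x] by (intro mult_nonneg_nonpos) auto
    moreover have "((\<lambda>x. u x * exp (- Q x)) has_real_derivative exp (- Q x) * (u' x - g x * u x)) (at x)"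
      using DERIV_mult[OF u[OF x] DERIV_chain2[OF DERIV_exp DERIV_minus[OF Q[OF x]]]]
      by (simp add: algebra_simps)
    ultimately show "\<exists>d. ((\<lambda>x. u x * exp (- Q x)) has_real_derivative d) (at x) \<and> d \<le> 0" by blast
  qed
  then show "u hi \<le> u lo * exp (Q hi - Q lo)"
    by (simp add: exp_diff exp_minus field_simps)
qed

lemma eigfun_energy_deriv_bound:
  assumes y: "eigfun q lam y" and lam: "0 < lam" and x: "x \<in> {0<..<1}" "0 \<le> q x"
  shows "((\<lambda>x. (deriv y x)^2 + lam * (y x)^2) has_real_derivative 2 * q x * y x * deriv y x) (at x)"
    and "\<bar>2 * q x * y x * deriv y x\<bar> \<le> q x / sqrt lam * ((deriv y x)^2 + lam * (y x)^2)"
proof -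
  have "(y has_real_derivative deriv y x) (at x)"
    "(deriv y has_real_derivative (q x - lam) * y x) (at x)"
    using y x by (auto simp: eigfun_def DERIV_deriv_iff_real_differentiable)
  then have "((\<lambda>x. (deriv y x)^2 + lam * (y x)^2) has_real_derivative
      2 * deriv y x * ((q x - lam) * y x) + lam * (2 * y x * deriv y x)) (at x)"
    by (auto intro!: derivative_eq_intros)
  then show "((\<lambda>x. (deriv y x)^2 + lam * (y x)^2) has_real_derivative 2 * q x * y x * deriv y x)
      (at x)"
    by (simp add: algebra_simps)
  have "0 \<le> (\<bar>deriv y x\<bar> - sqrt lam * \<bar>y x\<bar>)^2" by simp
  then have "2 * sqrt lam * \<bar>y x * deriv y x\<bar> \<le> (deriv y x)^2 + lam * (y x)^2"
    using lam by (simp add: power2_diff power_mult_distrib abs_mult algebra_simps)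
  from mult_left_mono[OF this x(2)] lam x(2)
  show "\<bar>2 * q x * y x * deriv y x\<bar> \<le> q x / sqrt lam * ((deriv y x)^2 + lam * (y x)^2)"
    by (simp add: abs_mult field_simps)
qed

lemma eigfun_energy_le:
  assumes y: "eigfun q lam y" and lam: "0 < lam"
    and q: "\<forall>x\<in>{0<..<1}. 0 \<le> q x" "continuous_on {0<..<1} q"
    and ab: "a \<in> {0<..<1}" "b \<in> {0<..<1}"
  shows "(deriv y a)^2 + lam * (y a)^2
    \<le> ((deriv y b)^2 + lam * (y b)^2) * exp (integral {min a b..max a b} q / sqrt lam)"
proof -
  define u where "u x = (deriv y x)^2 + lam * (y x)^2" for x
  define lo where "lo = min a b"
  define hi where "hi = max a b"
  define Q where "Q x = integral {lo/2..x} q / sqrt lam" for x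
  have lo_hi: "0 < lo" "lo \<le> hi" "hi < 1" using ab by (auto simp: lo_def hi_def)
  have q_cont: "continuous_on {lo/2..(1+hi)/2} q"
    by (rule continuous_on_subset[OF q(2)]) (use lo_hi in auto)
  have Q': "(Q has_real_derivative q x / sqrt lam) (at x)" if "x \<in> {lo..hi}" for x
  proof -
    have "((\<lambda>x. integral {lo/2..x} q) has_vector_derivative q x) (at x within {lo/2..(1+hi)/2})"
      by (rule integral_has_vector_derivative[OF q_cont]) (use that lo_hi in auto)
    then have "((\<lambda>x. integral {lo/2..x} q) has_real_derivative q x) (at x)"
      using that lo_hi
      by (subst (asm) at_within_interior) (auto simp: has_real_derivative_iff_has_vector_derivative)
    then show ?thesis unfolding Q_def by (rule DERIV_cdivide)
  qed
  have "x \<in> {0<..<1}" "0 \<le> q x" if "x \<in> {lo..hi}" for x using that lo_hi q(1) by auto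
  note u = eigfun_energy_deriv_bound[OF y lam this, folded u_def]
  note G = gronwall_two_sided[OF lo_hi(2) u(1) Q' u(2)]
  have "Q hi - Q lo = integral {lo..hi} q / sqrt lam"
    using Henstock_Kurzweil_Integration.integral_combine[of "lo/2" lo hi q] lo_hi
      integrable_continuous_real[OF continuous_on_subset[OF q_cont]]
    by (auto simp: Q_def diff_divide_distrib[symmetric])
  then show ?thesis
    using G by (cases "a \<le> b") (auto simp: lo_def hi_def u_def min_def max_def)
qed

lemma bounded_if_continuous_compact_support:
  fixes q :: "real \<Rightarrow> real"
  assumes q: "continuous_on {0<..<1} q"
    and support: "\<exists>a b. 0 < a \<and> a < b \<and> b < 1 \<and> (\<forall>x\<in>{0<..<1}. q x \<noteq> 0 \<longrightarrow> x \<in> {a..b})"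
  obtains Qm where "0 \<le> Qm" "\<forall>x\<in>{0<..<1}. \<bar>q x\<bar> \<le> Qm"
proof -
  obtain a b where ab: "0 < a" "b < 1" "\<forall>x\<in>{0<..<1}. q x \<noteq> 0 \<longrightarrow> x \<in> {a..b}"
    using support by blast
  have "continuous_on {a..b} q" by (rule continuous_on_subset[OF q]) (use ab in auto)
  then obtain M where "0 \<le> M" "\<And>x. x \<in> {a..b} \<Longrightarrow> \<bar>q x\<bar> \<le> M"
    using continuous_on_compact_bound[of "{a..b}" q] by auto
  with ab show ?thesis by (intro that[of M]) force+
qed

text \<open>Slopes of width \<open>3\<alpha>/4\<close> give energy at most \<open>2 / (3/4 \<cdot> 3\<alpha>/4) = 32 / (9\<alpha>)\<close>.\<close>
lemma smooth_cutoff_exists: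
  fixes \<alpha> :: real
  assumes \<alpha>: "0 < \<alpha>" "\<alpha> \<le> 1/4"
  obtains \<phi> where "infinitely_differentiable \<phi>"
    "\<And>x. x \<notin> {5/4 * \<alpha>..1 - 5/4 * \<alpha>} \<Longrightarrow> \<phi> x = 0"
    "\<And>x. x \<in> {2 * \<alpha>..1 - 2 * \<alpha>} \<Longrightarrow> \<phi> x = 1"
    "\<And>x. 0 \<le> \<phi> x"
    "integral {0..1} (\<lambda>x. (deriv \<phi> x)^2) \<le> 4 / \<alpha>"
proof
  define L where "L = 3/4 * \<alpha>"
  have L: "0 < L" "5/4 * \<alpha> + L \<le> 1 - 2 * \<alpha>" using \<alpha> by (auto simp: L_def)
  show "infinitely_differentiable (plateau flat_bump (5/4 * \<alpha>) L (1 - 2 * \<alpha>))"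
    by (rule flat_bump.infinitely_differentiable_plateau[OF L])
  show "plateau flat_bump (5/4 * \<alpha>) L (1 - 2 * \<alpha>) x = 0" if "x \<notin> {5/4 * \<alpha>..1 - 5/4 * \<alpha>}" for x
    using that by (intro flat_bump.plateau_eq_0[OF L]) (auto simp: L_def)
  show "plateau flat_bump (5/4 * \<alpha>) L (1 - 2 * \<alpha>) x = 1" if "x \<in> {2 * \<alpha>..1 - 2 * \<alpha>}" for x
    using that by (intro flat_bump.plateau_eq_1[OF L]) (auto simp: L_def)
  show "0 \<le> plateau flat_bump (5/4 * \<alpha>) L (1 - 2 * \<alpha>) x" for x
    by (rule flat_bump.plateau_nonneg[OF L])
  have "integral {0..1} (\<lambda>x. (deriv (plateau flat_bump (5/4 * \<alpha>) L (1 - 2 * \<alpha>)) x)^2)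
      \<le> 2 * 1 / (integral {0..1} flat_bump * L)"
    using \<alpha> by (intro flat_bump.plateau_energy[OF L] flat_bump_le_1) (auto simp: L_def)
  also have "\<dots> \<le> 2 / (3/4 * L)"
    using flat_bump_integral_ge L
    by (simp only: mult_1_right, intro divide_left_mono mult_right_mono mult_pos_pos) auto
  also have "\<dots> \<le> 4 / \<alpha>" using \<alpha> by (simp add: L_def field_simps)
  finally show "integral {0..1} (\<lambda>x. (deriv (plateau flat_bump (5/4 * \<alpha>) L (1 - 2 * \<alpha>)) x)^2)
      \<le> 4 / \<alpha>" .
qed

lemma set_integrable_vanishing_outside:
  fixes f :: "real \<Rightarrow> real"
  assumes "continuous_on {c..d} f" "{c..d} \<subseteq> {0..1}" "\<And>x. x \<notin> {c..d} \<Longrightarrow> f x = 0"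
  shows "set_integrable lborel {0..1} f"
proof -
  have "(\<lambda>x. indicator {c..d} x *\<^sub>R f x) = (\<lambda>x. indicator {0..1} x *\<^sub>R f x)"
    using assms(2,3) by (force simp: indicator_def)
  with borel_integrable_atLeastAtMost'[OF assms(1)] show ?thesis
    unfolding set_integrable_def by metis
qed

lemma interval_integral_le_qnorm:
  fixes q :: "real \<Rightarrow> real"
  assumes q: "continuous_on {0<..<1} q" "\<forall>x\<in>{0<..<1}. 0 \<le> q x"
    "\<forall>x\<in>{0<..<1}. \<bar>q x\<bar> \<le> Qm" "0 \<le> Qm"
    and l: "1 \<le> l" and lo_hi: "1 / 2 ^ l \<le> lo" "lo \<le> hi" "hi \<le> 1 - 1 / 2 ^ l"
    and N: "0 < N" "8 * 2 ^ l \<le> N^2"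
  shows "integral {lo..hi} q \<le> N * qnorm q (l + 1)"
proof -
  define \<alpha> :: real where "\<alpha> = 1 / 2 ^ (l + 1)"
  have "(2::real) ^ 1 \<le> 2 ^ l" by (rule power_increasing) (use l in auto)
  then have \<alpha>: "0 < \<alpha>" "\<alpha> \<le> 1/4" by (auto simp: \<alpha>_def field_simps)
  obtain \<phi> where \<phi>: "infinitely_differentiable \<phi>"
    "\<And>x. x \<notin> {5/4 * \<alpha>..1 - 5/4 * \<alpha>} \<Longrightarrow> \<phi> x = 0"
    "\<And>x. x \<in> {2 * \<alpha>..1 - 2 * \<alpha>} \<Longrightarrow> \<phi> x = 1" "\<And>x. 0 \<le> \<phi> x"
    "integral {0..1} (\<lambda>x. (deriv \<phi> x)^2) \<le> 4 / \<alpha>"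
    using smooth_cutoff_exists[OF \<alpha>] by blast
  have support: "{5/4 * \<alpha>..1 - 5/4 * \<alpha>} \<subseteq> {0<..<1}" using \<alpha> by auto
  have "set_integrable lborel {0..1} (\<lambda>x. q x * \<phi> x)"
    using support \<phi>(2) \<alpha>
    by (intro set_integrable_vanishing_outside[of "5/4 * \<alpha>" "1 - 5/4 * \<alpha>"] continuous_intros
        continuous_on_subset[OF q(1)] infinitely_differentiable_continuous_on \<phi>(1)) auto
  note q\<phi> = set_borel_integral_eq_integral[OF this]
  have lo_hi': "{lo..hi} \<subseteq> {2 * \<alpha>..1 - 2 * \<alpha>}" using lo_hi by (auto simp: \<alpha>_def)
  then have "integral {lo..hi} q = integral {lo..hi} (\<lambda>x. q x * \<phi> x)"
    using \<phi>(3) by (intro integral_cong) auto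
  also have "\<dots> \<le> integral {0..1} (\<lambda>x. q x * \<phi> x)"
  proof (rule integral_subset_le)
    show "{lo..hi} \<subseteq> {0..1}" using lo_hi' \<alpha> by auto
    then show "(\<lambda>x. q x * \<phi> x) integrable_on {lo..hi}"
      by (intro integrable_on_subinterval[OF q\<phi>(1)]) auto
    show "\<forall>x\<in>{0..1}. 0 \<le> q x * \<phi> x"
      using q(2) \<phi>(2,4) support by (metis mult_nonneg_nonneg mult_zero_right subsetD)
  qed (rule q\<phi>(1))
  also have "\<dots> \<le> N * qnorm q (l + 1)"
    unfolding q\<phi>(2)[symmetric]
  proof (rule integral_le_qnorm[OF q(3,4) \<phi>(1) _ _ _ \<phi>(2) N(1)])
    show "1 / 2 ^ (l + 1) < 5/4 * \<alpha>" "5/4 * \<alpha> \<le> 1 - 5/4 * \<alpha>"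
      "1 - 5/4 * \<alpha> < 1 - 1 / 2 ^ (l + 1)"
      unfolding \<alpha>_def[symmetric] using \<alpha> by auto
    show "integral {0..1} (\<lambda>x. (deriv \<phi> x)^2) \<le> N^2"
      using \<phi>(5) N(2) by (simp add: \<alpha>_def)
  qed
  finally show ?thesis .
qed

theorem mainTheorem9:
  fixes q y :: "real \<Rightarrow> real" and n l :: nat and x1 x2 :: real
  assumes "continuous_on {0<..<1} q"
    and "\<forall>x\<in>{0<..<1}. q x \<ge> 0"
    and "\<exists>a b. 0 < a \<and> a < b \<and> b < 1 \<and> (\<forall>x\<in>{0<..<1}. q x \<noteq> 0 \<longrightarrow> x \<in> {a..b})"
    and "l \<ge> 2"
    and "eigfun q (eig q n) y"
    and "integral {0..1} (\<lambda>x. (y x)\<^sup>2) = 1"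
    and "x1 \<in> {1 / 2 ^ l .. 1 - 1 / 2 ^ l}"
    and "x2 \<in> {1 / 2 ^ l .. 1 - 1 / 2 ^ l}"
  shows "uqn q n y x1 / uqn q n y x2 \<le> exp (2 powr (real l / 2) * qnorm q (l + 1))"
proof -
  define lam where "lam = eig q n"
  define I where "I = integral {min x1 x2..max x1 x2} q"
  note y = assms(5)[folded lam_def]
  obtain Qm where Qm: "0 \<le> Qm" "\<forall>x\<in>{0<..<1}. \<bar>q x\<bar> \<le> Qm"
    using bounded_if_continuous_compact_support[OF assms(1,3)] by blast
  have lam: "8 \<le> lam" by (rule eigenvalue_ge_8[OF y assms(2) Qm(2) assms(6)])
  have "(2 powr (real l / 2))^2 = 2 ^ l"
    by (simp add: power2_eq_square powr_realpow flip: powr_add)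
  then have "(sqrt lam * 2 powr (real l / 2))^2 = lam * 2 ^ l"
    using lam by (simp add: power_mult_distrib)
  then have "I \<le> sqrt lam * 2 powr (real l / 2) * qnorm q (l + 1)"
    unfolding I_def using assms(4,7,8) lam
    by (intro interval_integral_le_qnorm[OF assms(1,2) Qm(2,1)]) (auto intro: mult_right_mono)
  then have "exp (I / sqrt lam) \<le> exp (2 powr (real l / 2) * qnorm q (l + 1))"
    using lam by (simp add: divide_le_eq mult_ac)
  moreover have "x1 \<in> {0<..<1}" "x2 \<in> {0<..<1}"
    using assms(7,8) by (auto intro: less_le_trans[of 0 "1 / 2 ^ l"] le_less_trans[of _ "1 - 1 / 2 ^ l"])
  then have "uqn q n y x1 \<le> uqn q n y x2 * exp (I / sqrt lam)"
    using eigfun_energy_le[OF y _ assms(2,1)] lam by (simp add: uqn_def lam_def I_def)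
  moreover have "0 \<le> uqn q n y x2" using lam by (simp add: uqn_def lam_def[symmetric])
  ultimately show ?thesis
    by (cases "uqn q n y x2 = 0")
       (auto simp: divide_le_eq mult.commute intro: order_trans mult_left_mono)
qed

end
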